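(* Let $V=\mathbb{C}^n$ be the defining representation of $GL_n(\mathbb{C})$ restricted to $T\rtimes S_n$, and let $k_1,\dots,k_m\ge 0$. Let $A^n_{k_1,\dots,k_m}$ be the set of $(k_1+1)\times\dots\times(k_m+1)$ arrays $B=(b_{i_1,\dots,i_m})_{0\le i_j\le k_j}$ such that the $(0,\dots,0)$ entry is left blank, all other entries are nonnegative integers, $\sum_{i_1,\dots,i_m}i_j\,b_{i_1,\dots,i_m}=k_j$ for every $j$, and the sum of all entries is at most $n$. Then, as representations of $T\rtimes S_n$, $$\mathrm{Sym}^{k_1}(V)\otimes\dots\otimes\mathrm{Sym}^{k_m}(V)\cong\bigoplus_{B\in A^n_{k_1,\dots,k_m}}\tilde{M}(\lambda_1(B),\lambda_2(B),\dots,\lambda_{k_1+\dots+k_m}(B)),$$ where $\lambda_\ell(B)$ is the partition whose parts are the nonzero entries $b_{i_1,\dots,i_m}$ with $i_1+\dots+i_m=\ell$.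
   Context: Let $T\subset GL_n(\mathbb{C})$ be the diagonal torus, $S_n$ the permutation matrices, and $T\rtimes S_n\cong\mathbb{C}^\times\wr S_n$ the monomial matrices. For a partition $\lambda$ of $r$ and integer $k$, $S^{\lambda,k}$ is the representation of $\mathbb{C}^\times\wr S_r$ on the Specht module $S^\lambda$ with each copy of $\mathbb{C}^\times$ acting by $z\mapsto z^k$. For a composition $\nu=(\nu_1,\dots,\nu_\ell)$ of $n$ and integers $\mathbf{w}$, $M(\nu,\mathbf{w}):=\mathrm{Ind}_{(\mathbb{C}^\times\wr S_{\nu_1})\times\dots\times(\mathbb{C}^\times\wr S_{\nu_\ell})}^{\mathbb{C}^\times\wr S_n}(S^{(\nu_1),w_1}\otimes\dots\otimes S^{(\nu_\ell),w_\ell})$ (block-diagonal subgroup). For partitions $\lambda^1,\dots,\lambda^j$, $\lambda^i=(\lambda^i_1,\dots,\lambda^i_{\ell_i})$, of total size $m\le n$, $\tilde{M}(\lambda^1,\dots,\lambda^j):=M((n-m,\lambda^1_1,\dots,\lambda^1_{\ell_1},\dots,\lambda^j_1,\dots,\lambda^j_{\ell_j}),(0,1,\dots,1,\dots,j,\dots,j))$ with $\ell_i$ entries equal to $i$ (the part $n-m$ omitted if zero). *)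

theory Defs
  imports Complex_Main "HOL-Library.Multiset"
begin

text \<open>Group elements: n x n complex matrices, encoded as functions nat => nat => complex
  with all entries outside {0..<n} x {0..<n} equal to zero.\<close>

type_synonym cmat = "nat \<Rightarrow> nat \<Rightarrow> complex"

definition mmul :: "nat \<Rightarrow> cmat \<Rightarrow> cmat \<Rightarrow> cmat" where
  "mmul n g h = (\<lambda>i j. if i < n \<and> j < n then (\<Sum>l<n. g i l * h l j) else 0)"

text \<open>Monomial matrices T \<rtimes> S_n inside GL_n(C): exactly one nonzero entry in each row and column.\<close>
definition monomial_group :: "nat \<Rightarrow> cmat set" where
  "monomial_group n = {g. (\<forall>i j. (n \<le> i \<or> n \<le> j) \<longrightarrow> g i j = 0)
      \<and> (\<forall>j<n. \<exists>!i. i < n \<and> g i j \<noteq> 0) \<and> (\<forall>i<n. \<exists>!j. j < n \<and> g i j \<noteq> 0)}"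

text \<open>A finite-dimensional representation with basis X: K g y x is the coefficient of
  e_y in g . e_x.\<close>
type_synonym ('g,'x) rep = "'x set \<times> ('g \<Rightarrow> 'x \<Rightarrow> 'x \<Rightarrow> complex)"

definition rep_iso :: "'g set \<Rightarrow> ('g,'x) rep \<Rightarrow> ('g,'y) rep \<Rightarrow> bool" where
  "rep_iso G R S = (case R of (X, K) \<Rightarrow> case S of (Y, L) \<Rightarrow>
     finite X \<and> finite Y \<and>
     (\<exists>(P :: 'y \<Rightarrow> 'x \<Rightarrow> complex) (Q :: 'x \<Rightarrow> 'y \<Rightarrow> complex).
        (\<forall>x\<in>X. \<forall>x'\<in>X. (\<Sum>y\<in>Y. Q x y * P y x') = (if x = x' then 1 else 0)) \<and>
        (\<forall>y\<in>Y. \<forall>y'\<in>Y. (\<Sum>x\<in>X. P y x * Q x y') = (if y = y' then 1 else 0)) \<and>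
        (\<forall>g\<in>G. \<forall>y\<in>Y. \<forall>x\<in>X.
            (\<Sum>y'\<in>Y. L g y y' * P y' x) = (\<Sum>x'\<in>X. P y x' * K g x' x))))"

definition defrep :: "nat \<Rightarrow> (cmat, nat) rep" where
  "defrep n = ({..<n}, (\<lambda>g i j. g i j))"

text \<open>Symmetric power Sym^k: basis = monomials (multisets of size k of basis vectors);
  g . (x_1 ... x_k) = prod_i (sum_y K g y x_i  y).\<close>
definition symrep :: "nat \<Rightarrow> ('g,'x) rep \<Rightarrow> ('g, 'x multiset) rep" where
  "symrep k R = (case R of (X, K) \<Rightarrow>
     ({\<alpha>. set_mset \<alpha> \<subseteq> X \<and> size \<alpha> = k},
      (\<lambda>g \<beta> \<alpha>. let xs = (SOME xs. mset xs = \<alpha>) in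
          \<Sum>ys\<in>{ys. length ys = k \<and> mset ys = \<beta>}. \<Prod>i<k. K g (ys ! i) (xs ! i))))"

definition tensor_list :: "('g,'x) rep list \<Rightarrow> ('g, 'x list) rep" where
  "tensor_list Rs =
     ({xs. length xs = length Rs \<and> (\<forall>i<length Rs. xs ! i \<in> fst (Rs ! i))},
      (\<lambda>g ys xs. \<Prod>i<length Rs. snd (Rs ! i) g (ys ! i) (xs ! i)))"

definition dsum :: "'a set \<Rightarrow> ('a \<Rightarrow> ('g,'x) rep) \<Rightarrow> ('g, 'a \<times> 'x) rep" where
  "dsum A R = (Sigma A (\<lambda>a. fst (R a)),
      (\<lambda>g (a', y) (a, x). if a = a' then snd (R a) g y x else 0))"

text \<open>Basis: left cosets c = gH; g . (r_c \<otimes> 1) = chi(h) (r_c' \<otimes> 1) where g r_c = r_c' h,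
  with r_c a chosen representative of c.\<close>
definition ind_char :: "('g \<Rightarrow> 'g \<Rightarrow> 'g) \<Rightarrow> 'g set \<Rightarrow> 'g set \<Rightarrow> ('g \<Rightarrow> complex) \<Rightarrow> ('g, 'g set) rep" where
  "ind_char mul G H chi =
     ((\<lambda>g. (\<lambda>h. mul g h) ` H) ` G,
      (\<lambda>g c' c. let r = (\<lambda>c. SOME x. x \<in> c) in
         if \<exists>h\<in>H. mul g (r c) = mul (r c') h
         then chi (THE h. h \<in> H \<and> mul g (r c) = mul (r c') h) else 0))"

definition block :: "nat list \<Rightarrow> nat \<Rightarrow> nat set" where
  "block nu b = {sum_list (take b nu) ..< sum_list (take (Suc b) nu)}"

text \<open>Block-diagonal subgroup (C^x wr S_nu1) x ... x (C^x wr S_nul).\<close>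
definition block_subgroup :: "nat \<Rightarrow> nat list \<Rightarrow> cmat set" where
  "block_subgroup n nu = {g \<in> monomial_group n.
      \<forall>i j. g i j \<noteq> 0 \<longrightarrow> (\<exists>b<length nu. i \<in> block nu b \<and> j \<in> block nu b)}"

text \<open>Column sum = the unique nonzero entry of a column of a monomial matrix.\<close>
definition colent :: "nat \<Rightarrow> cmat \<Rightarrow> nat \<Rightarrow> complex" where
  "colent n g j = (\<Sum>i<n. g i j)"

text \<open>The character S^{(nu_1),w_1} \<otimes> ... \<otimes> S^{(nu_l),w_l}: trivial Specht modules, the copies of
  C^x in block b acting by z \<mapsto> z^{w_b}.\<close>
definition block_char :: "nat \<Rightarrow> nat list \<Rightarrow> int list \<Rightarrow> cmat \<Rightarrow> complex" where
  "block_char n nu w h = (\<Prod>b<length nu. (\<Prod>j\<in>block nu b. colent n h j) powi (w ! b))"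

definition Mrep :: "nat \<Rightarrow> nat list \<Rightarrow> int list \<Rightarrow> (cmat, cmat set) rep" where
  "Mrep n nu w = ind_char (mmul n) (monomial_group n) (block_subgroup n nu) (block_char n nu w)"

definition Mtilde :: "nat \<Rightarrow> nat list list \<Rightarrow> (cmat, cmat set) rep" where
  "Mtilde n lams = (let m = sum_list (map sum_list lams);
       nu = (if n - m = 0 then [] else [n - m]) @ concat lams;
       w = (if n - m = 0 then [] else [0]) @
           concat (map (\<lambda>(i, lam). replicate (length lam) (int i)) (zip [1..<Suc (length lams)] lams))
     in Mrep n nu w)"

definition arr_index :: "nat list \<Rightarrow> nat list set" where
  "arr_index ks = {is. length is = length ks \<and> (\<forall>j<length ks. is ! j \<le> ks ! j)
                        \<and> is \<noteq> replicate (length ks) 0}"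

definition arrays :: "nat \<Rightarrow> nat list \<Rightarrow> (nat list \<Rightarrow> nat) set" where
  "arrays n ks = {B. (\<forall>is. is \<notin> arr_index ks \<longrightarrow> B is = 0)
     \<and> (\<forall>j<length ks. (\<Sum>is\<in>arr_index ks. is ! j * B is) = ks ! j)
     \<and> (\<Sum>is\<in>arr_index ks. B is) \<le> n}"

definition lam_part :: "nat list \<Rightarrow> (nat list \<Rightarrow> nat) \<Rightarrow> nat \<Rightarrow> nat list" where
  "lam_part ks B l = rev (sorted_list_of_multiset
     (image_mset B (filter_mset (\<lambda>is. sum_list is = l \<and> B is \<noteq> 0) (mset_set (arr_index ks)))))"

end

theory Submission
  imports Defs "HOL-Algebra.Group"
begin

text \<open>
  The monomial group permutes the tensor basis of Sym^k1(V) \<otimes> ... \<otimes> Sym^km(V) up to nonzero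
  scalars.  Such a monomial representation is the direct sum over the orbits on the basis, and the
  summand of an orbit is induced from the character by which the stabiliser of a point scales it.
  A basis tensor amounts to an exponent vector (i1, ..., im) for each variable x_a; since permutation
  matrices move the variables, the orbits are classified by the arrays B counting the variables
  with each nonzero exponent vector.  Grouping the variables by exponent vector, the stabiliser
  becomes the block-diagonal subgroup of a composition of n, whose torus acts on the block of
  exponent vector i by z \<mapsto> z^(i1 + ... + im); the induced representation is therefore M-tilde of
  the partitions \<lambda>_l(B).
\<close>

section \<open>Monomial matrices\<close>

definition mono_perm :: "nat \<Rightarrow> cmat \<Rightarrow> nat \<Rightarrow> nat" where
  "mono_perm n g a = (THE i. i < n \<and> g i a \<noteq> 0)"

definition mono_entry :: "nat \<Rightarrow> cmat \<Rightarrow> nat \<Rightarrow> complex" where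
  "mono_entry n g a = g (mono_perm n g a) a"

definition mono_one :: "nat \<Rightarrow> cmat" where
  "mono_one n = (\<lambda>i j. if i < n \<and> i = j then 1 else 0)"

definition mono_inv :: "nat \<Rightarrow> cmat \<Rightarrow> cmat" where
  "mono_inv n g = (\<lambda>i j. if i < n \<and> j < n \<and> g j i \<noteq> 0 then 1 / g j i else 0)"

definition mono_grp :: "nat \<Rightarrow> cmat monoid" where
  "mono_grp n = \<lparr>carrier = monomial_group n, mult = mmul n, one = mono_one n\<rparr>"

lemma monomial_groupI:
  assumes "\<And>i j. g i j \<noteq> 0 \<Longrightarrow> i < n \<and> j < n"
    and "\<And>j. j < n \<Longrightarrow> \<exists>!i. i < n \<and> g i j \<noteq> 0"
    and "\<And>i. i < n \<Longrightarrow> \<exists>!j. j < n \<and> g i j \<noteq> 0"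
  shows "g \<in> monomial_group n"
  using assms unfolding monomial_group_def by (auto simp: not_less[symmetric])

lemma monomial_group_nonzero_lt:
  "g \<in> monomial_group n \<Longrightarrow> g i j \<noteq> 0 \<Longrightarrow> i < n \<and> j < n"
  unfolding monomial_group_def by (metis (mono_tags, lifting) mem_Collect_eq not_le)

context
  fixes n g assumes g: "g \<in> monomial_group n"
begin

lemma mono_perm_lt: "a < n \<Longrightarrow> mono_perm n g a < n"
  and mono_entry_nonzero: "a < n \<Longrightarrow> mono_entry n g a \<noteq> 0"
proof -
  assume "a < n"
  then have "\<exists>!i. i < n \<and> g i a \<noteq> 0" using g by (simp add: monomial_group_def)
  then have "mono_perm n g a < n \<and> g (mono_perm n g a) a \<noteq> 0"
    unfolding mono_perm_def by (rule theI')
  then show "mono_perm n g a < n" "mono_entry n g a \<noteq> 0" by (auto simp: mono_entry_def)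
qed

lemma mono_perm_eq: "g i a \<noteq> 0 \<Longrightarrow> mono_perm n g a = i"
proof -
  assume nz: "g i a \<noteq> 0"
  then have "i < n" "a < n" using monomial_group_nonzero_lt[OF g] by auto
  then have "\<exists>!i. i < n \<and> g i a \<noteq> 0" using g by (simp add: monomial_group_def)
  then show ?thesis unfolding mono_perm_def by (rule the1_equality) (simp add: nz \<open>i < n\<close>)
qed

lemma monomial_group_entry: "g i a = (if a < n \<and> i = mono_perm n g a then mono_entry n g a else 0)"
  using mono_perm_eq monomial_group_nonzero_lt[OF g] by (auto simp: mono_entry_def)

lemma inj_on_mono_perm: "inj_on (mono_perm n g) {..<n}"
proof
  fix a b assume "a \<in> {..<n}" "b \<in> {..<n}" "mono_perm n g a = mono_perm n g b"
  moreover have "\<exists>!j. j < n \<and> g (mono_perm n g a) j \<noteq> 0"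
    using g mono_perm_lt \<open>a \<in> {..<n}\<close> by (simp add: monomial_group_def)
  ultimately show "a = b"
    using mono_entry_nonzero unfolding mono_entry_def by (metis lessThan_iff)
qed

lemma bij_mono_perm: "bij_betw (mono_perm n g) {..<n} {..<n}"
  using inj_on_mono_perm mono_perm_lt
  by (simp add: bij_betw_def endo_inj_surj image_subset_iff)

lemma mono_perm_surj: "b < n \<Longrightarrow> \<exists>a<n. mono_perm n g a = b"
  using bij_mono_perm by (metis bij_betw_iff_bijections lessThan_iff)

end

lemma monomial_group_eqI:
  assumes "g \<in> monomial_group n" "h \<in> monomial_group n"
    and "\<And>a. a < n \<Longrightarrow> mono_perm n g a = mono_perm n h a \<and> mono_entry n g a = mono_entry n h a"
  shows "g = h"
  using assms monomial_group_entry[OF assms(1)] monomial_group_entry[OF assms(2)] by (intro ext) metis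

lemma mmul_monomial:
  assumes g: "g \<in> monomial_group n" and h: "h \<in> monomial_group n"
  shows "mmul n g h i j = (if j < n \<and> i = mono_perm n g (mono_perm n h j)
                           then mono_entry n g (mono_perm n h j) * mono_entry n h j else 0)"
proof (cases "i < n \<and> j < n")
  case True
  have p: "mono_perm n h j < n" using mono_perm_lt[OF h] True by simp
  have "(\<Sum>l<n. g i l * h l j)
      = (\<Sum>l<n. if l = mono_perm n h j then g i (mono_perm n h j) * mono_entry n h j else 0)"
    using True by (intro sum.cong refl) (subst monomial_group_entry[OF h], simp)
  also have "\<dots> = g i (mono_perm n h j) * mono_entry n h j"
    using p by simp
  finally show ?thesis
    using True p monomial_group_entry[OF g, of i "mono_perm n h j"] by (simp add: mmul_def)
next
  case False
  then show ?thesis unfolding mmul_def using mono_perm_lt[OF g] mono_perm_lt[OF h] by auto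
qed

lemma mmul_closed:
  assumes g: "g \<in> monomial_group n" and h: "h \<in> monomial_group n"
  shows "mmul n g h \<in> monomial_group n"
proof -
  have nz: "mmul n g h i j \<noteq> 0 \<longleftrightarrow> j < n \<and> i = mono_perm n g (mono_perm n h j)" for i j
    using mmul_monomial[OF g h, of i j] mono_entry_nonzero[OF g] mono_entry_nonzero[OF h]
      mono_perm_lt[OF h] by auto
  have inj: "inj_on (mono_perm n g \<circ> mono_perm n h) {..<n}"
    using bij_mono_perm[OF g] bij_mono_perm[OF h] by (metis bij_betw_def bij_betw_trans)
  show ?thesis
  proof (rule monomial_groupI)
    fix i assume "i < n"
    then obtain j where "j < n" "i = mono_perm n g (mono_perm n h j)"
      using mono_perm_surj[OF g] mono_perm_surj[OF h] by metis
    then show "\<exists>!j. j < n \<and> mmul n g h i j \<noteq> 0"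
      using inj unfolding nz by (metis comp_apply inj_onD lessThan_iff)
  next
    fix j assume "j < n"
    then show "\<exists>!i. i < n \<and> mmul n g h i j \<noteq> 0"
      unfolding nz using mono_perm_lt[OF g] mono_perm_lt[OF h] by auto
  next
    fix i j assume "mmul n g h i j \<noteq> 0"
    then show "i < n \<and> j < n"
      unfolding nz using mono_perm_lt[OF g] mono_perm_lt[OF h] by simp
  qed
qed

lemma
  assumes g: "g \<in> monomial_group n" and h: "h \<in> monomial_group n" and a: "a < n"
  shows mono_perm_mmul: "mono_perm n (mmul n g h) a = mono_perm n g (mono_perm n h a)"
    and mono_entry_mmul: "mono_entry n (mmul n g h) a = mono_entry n g (mono_perm n h a) * mono_entry n h a"
proof -
  have "mmul n g h (mono_perm n g (mono_perm n h a)) a \<noteq> 0"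
    using mmul_monomial[OF g h] a mono_entry_nonzero[OF g] mono_entry_nonzero[OF h] mono_perm_lt[OF h]
    by simp
  then show perm: "mono_perm n (mmul n g h) a = mono_perm n g (mono_perm n h a)"
    by (rule mono_perm_eq[OF mmul_closed[OF g h]])
  show "mono_entry n (mmul n g h) a = mono_entry n g (mono_perm n h a) * mono_entry n h a"
    unfolding mono_entry_def[of _ "mmul n g h"] perm using mmul_monomial[OF g h] a by simp
qed

lemma mono_one_closed: "mono_one n \<in> monomial_group n"
  unfolding monomial_group_def mono_one_def by auto

lemma
  assumes "a < n"
  shows mono_perm_one: "mono_perm n (mono_one n) a = a"
    and mono_entry_one: "mono_entry n (mono_one n) a = 1"
proof -
  show perm: "mono_perm n (mono_one n) a = a"
    by (rule mono_perm_eq[OF mono_one_closed]) (simp add: mono_one_def assms)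
  show "mono_entry n (mono_one n) a = 1"
    unfolding mono_entry_def perm by (simp add: mono_one_def assms)
qed

context
  fixes n g assumes g: "g \<in> monomial_group n"
begin

lemma mono_inv_closed: "mono_inv n g \<in> monomial_group n"
  using g unfolding monomial_group_def mono_inv_def by auto

lemma
  assumes "a < n"
  shows mono_perm_inv: "mono_perm n (mono_inv n g) (mono_perm n g a) = a"
    and mono_entry_inv: "mono_entry n (mono_inv n g) (mono_perm n g a) = 1 / mono_entry n g a"
proof -
  show perm: "mono_perm n (mono_inv n g) (mono_perm n g a) = a"
    by (rule mono_perm_eq[OF mono_inv_closed])
      (use assms mono_perm_lt[OF g] mono_entry_nonzero[OF g] in \<open>simp add: mono_inv_def mono_entry_def\<close>)
  show "mono_entry n (mono_inv n g) (mono_perm n g a) = 1 / mono_entry n g a"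
    unfolding mono_entry_def[of _ "mono_inv n g"] perm
    using assms mono_perm_lt[OF g] mono_entry_nonzero[OF g] by (simp add: mono_inv_def mono_entry_def)
qed

lemma mono_inv_mmul: "mmul n (mono_inv n g) g = mono_one n"
  by (rule monomial_group_eqI[OF mmul_closed[OF mono_inv_closed g] mono_one_closed])
    (simp add: mono_perm_mmul[OF mono_inv_closed g] mono_entry_mmul[OF mono_inv_closed g]
      mono_perm_inv mono_entry_inv mono_perm_one mono_entry_one mono_entry_nonzero[OF g])

end

lemma mono_grp_simps [simp]:
  "carrier (mono_grp n) = monomial_group n" "mult (mono_grp n) = mmul n" "one (mono_grp n) = mono_one n"
  by (simp_all add: mono_grp_def)

lemma group_mono_grp: "group (mono_grp n)"
proof (rule groupI, unfold mono_grp_simps)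
  fix g h k assume g: "g \<in> monomial_group n" and h: "h \<in> monomial_group n" and k: "k \<in> monomial_group n"
  show "mmul n (mmul n g h) k = mmul n g (mmul n h k)"
    by (rule monomial_group_eqI[where n = n])
      (simp_all add: g h k mmul_closed mono_perm_mmul mono_entry_mmul mono_perm_lt)
next
  fix g assume g: "g \<in> monomial_group n"
  show "mmul n (mono_one n) g = g"
    by (rule monomial_group_eqI[where n = n])
      (simp_all add: g mmul_closed mono_one_closed mono_perm_mmul mono_entry_mmul mono_perm_one
        mono_entry_one mono_perm_lt)
  show "\<exists>h\<in>monomial_group n. mmul n h g = mono_one n"
    using mono_inv_closed[OF g] mono_inv_mmul[OF g] by blast
qed (simp_all add: mmul_closed mono_one_closed)

section \<open>Monomial isomorphisms of representations\<close>

text \<open>The isomorphism sending the basis vector \<open>x\<close> to \<open>s x\<close> times the basis vector \<open>\<phi> x\<close>.\<close>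

definition monomial_iso :: "'g set \<Rightarrow> ('g,'x) rep \<Rightarrow> ('g,'y) rep \<Rightarrow> bool" where
  "monomial_iso G R S = (finite (fst R) \<and> finite (fst S) \<and>
     (\<exists>\<phi> s. bij_betw \<phi> (fst R) (fst S) \<and> (\<forall>x\<in>fst R. s x \<noteq> 0) \<and>
       (\<forall>g\<in>G. \<forall>x\<in>fst R. \<forall>x'\<in>fst R. snd S g (\<phi> x') (\<phi> x) * s x = s x' * snd R g x' x)))"

lemma monomial_iso_imp_rep_iso:
  assumes "monomial_iso G (X, K) (Y, L)"
  shows "rep_iso G (X, K) (Y, L)"
proof -
  from assms obtain \<phi> s where fin: "finite X" "finite Y" and bij: "bij_betw \<phi> X Y"
    and nz: "\<forall>x\<in>X. s x \<noteq> 0"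
    and intw: "\<forall>g\<in>G. \<forall>x\<in>X. \<forall>x'\<in>X. L g (\<phi> x') (\<phi> x) * s x = s x' * K g x' x"
    unfolding monomial_iso_def by auto
  define \<psi> where "\<psi> = the_inv_into X \<phi>"
  have \<psi>: "\<psi> y \<in> X" "\<phi> (\<psi> y) = y" if "y \<in> Y" for y
    using that bij_betwE[OF bij_betw_the_inv_into[OF bij]] f_the_inv_into_f_bij_betw[OF bij]
    unfolding \<psi>_def by auto
  have \<phi>_eq_iff: "\<phi> x = y \<longleftrightarrow> x = \<psi> y" if "x \<in> X" "y \<in> Y" for x y
    using that \<psi> bij by (metis bij_betw_def inj_onD)
  define P where "P y x = (if y = \<phi> x then s x else 0)" for y x
  have P_eq: "P y x = (if x = \<psi> y then s x else 0)" if "x \<in> X" "y \<in> Y" for x y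
    using \<phi>_eq_iff[OF that] by (auto simp: P_def)
  define Q where "Q x y = (if y = \<phi> x then 1 / s x else 0)" for x y
  have left_inv: "(\<Sum>y\<in>Y. Q x y * P y x') = (if x = x' then 1 else 0)"
    if "x \<in> X" "x' \<in> X" for x x'
  proof -
    have "(\<Sum>y\<in>Y. Q x y * P y x') = (\<Sum>y\<in>Y. if y = \<phi> x then Q x (\<phi> x) * P (\<phi> x) x' else 0)"
      by (rule sum.cong) (auto simp: Q_def)
    also have "\<dots> = Q x (\<phi> x) * P (\<phi> x) x'"
      using fin bij_betwE[OF bij] that by simp
    also have "\<dots> = (if x = x' then 1 else 0)"
      using that bij nz by (auto simp: P_def Q_def bij_betw_def inj_on_eq_iff)
    finally show ?thesis .
  qed
  have right_inv: "(\<Sum>x\<in>X. P y x * Q x y') = (if y = y' then 1 else 0)"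
    if "y \<in> Y" "y' \<in> Y" for y y'
  proof -
    have "(\<Sum>x\<in>X. P y x * Q x y') = (\<Sum>x\<in>X. if x = \<psi> y then P y (\<psi> y) * Q (\<psi> y) y' else 0)"
      using that by (intro sum.cong) (auto simp: P_eq)
    also have "\<dots> = P y (\<psi> y) * Q (\<psi> y) y'"
      using fin \<psi> that by simp
    also have "\<dots> = (if y = y' then 1 else 0)"
      using that \<psi> nz by (auto simp: P_def Q_def)
    finally show ?thesis .
  qed
  have intertwines: "(\<Sum>y'\<in>Y. L g y y' * P y' x) = (\<Sum>x'\<in>X. P y x' * K g x' x)"
    if "g \<in> G" "y \<in> Y" "x \<in> X" for g y x
  proof -
    have "(\<Sum>y'\<in>Y. L g y y' * P y' x) = (\<Sum>y'\<in>Y. if y' = \<phi> x then L g y (\<phi> x) * s x else 0)"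
      by (rule sum.cong) (auto simp: P_def)
    also have "\<dots> = L g y (\<phi> x) * s x"
      using fin bij_betwE[OF bij] that by simp
    also have "\<dots> = s (\<psi> y) * K g (\<psi> y) x"
      using intw that \<psi> by metis
    also have "\<dots> = (\<Sum>x'\<in>X. if x' = \<psi> y then s (\<psi> y) * K g (\<psi> y) x else 0)"
      using fin \<psi> that by simp
    also have "\<dots> = (\<Sum>x'\<in>X. P y x' * K g x' x)"
      using that by (intro sum.cong) (auto simp: P_eq)
    finally show ?thesis .
  qed
  show ?thesis
    unfolding rep_iso_def prod.case using fin left_inv right_inv intertwines
    by (intro conjI exI[where x = P] exI[where x = Q] ballI) auto
qed

lemma bij_betw_fibrewise:
  assumes "\<And>x. x \<in> X \<Longrightarrow> \<beta> x \<in> A"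
    and "\<And>a. a \<in> A \<Longrightarrow> bij_betw (\<Phi> a) {x\<in>X. \<beta> x = a} (Y a)"
  shows "bij_betw (\<lambda>x. (\<beta> x, \<Phi> (\<beta> x) x)) X (Sigma A Y)"
proof (rule bij_betw_imageI)
  show "inj_on (\<lambda>x. (\<beta> x, \<Phi> (\<beta> x) x)) X"
  proof
    fix x x' assume "x \<in> X" "x' \<in> X" "(\<beta> x, \<Phi> (\<beta> x) x) = (\<beta> x', \<Phi> (\<beta> x') x')"
    then have "\<beta> x = \<beta> x'" "\<Phi> (\<beta> x) x = \<Phi> (\<beta> x) x'" by auto
    moreover have "inj_on (\<Phi> (\<beta> x)) {y\<in>X. \<beta> y = \<beta> x}"
      using assms \<open>x \<in> X\<close> bij_betw_imp_inj_on by blast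
    ultimately show "x = x'"
      using \<open>x \<in> X\<close> \<open>x' \<in> X\<close> by (auto dest: inj_onD)
  qed
  show "(\<lambda>x. (\<beta> x, \<Phi> (\<beta> x) x)) ` X = Sigma A Y"
  proof
    show "(\<lambda>x. (\<beta> x, \<Phi> (\<beta> x) x)) ` X \<subseteq> Sigma A Y"
      using assms by (auto dest: bij_betwE)
    show "Sigma A Y \<subseteq> (\<lambda>x. (\<beta> x, \<Phi> (\<beta> x) x)) ` X"
    proof clarify
      fix a y assume "a \<in> A" "y \<in> Y a"
      then have "y \<in> \<Phi> a ` {x\<in>X. \<beta> x = a}"
        using assms(2) unfolding bij_betw_def by blast
      then obtain x where "x \<in> X" "\<beta> x = a" "\<Phi> a x = y" by blast
      then show "(a, y) \<in> (\<lambda>x. (\<beta> x, \<Phi> (\<beta> x) x)) ` X" by force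
    qed
  qed
qed

lemma monomial_iso_dsum:
  assumes "finite A" "finite X" and \<beta>: "\<And>x. x \<in> X \<Longrightarrow> \<beta> x \<in> A"
    and pieces: "\<And>a. a \<in> A \<Longrightarrow> monomial_iso G ({x\<in>X. \<beta> x = a}, K) (R a)"
    and block_diagonal: "\<And>g x x'. \<lbrakk>g \<in> G; x \<in> X; x' \<in> X; \<beta> x' \<noteq> \<beta> x\<rbrakk> \<Longrightarrow> K g x' x = 0"
  shows "monomial_iso G (X, K) (dsum A R)"
proof -
  define piece_iso where "piece_iso a \<phi> s \<longleftrightarrow>
      bij_betw \<phi> {x\<in>X. \<beta> x = a} (fst (R a)) \<and> (\<forall>x\<in>{x\<in>X. \<beta> x = a}. s x \<noteq> 0) \<and>
      (\<forall>g\<in>G. \<forall>x\<in>{x\<in>X. \<beta> x = a}. \<forall>x'\<in>{x\<in>X. \<beta> x = a}.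
          snd (R a) g (\<phi> x') (\<phi> x) * s x = s x' * K g x' x)" for a \<phi> s
  have "\<forall>a\<in>A. \<exists>\<phi> s. piece_iso a \<phi> s"
    using pieces unfolding monomial_iso_def piece_iso_def by auto
  then have "\<exists>\<Phi>. \<forall>a\<in>A. \<exists>s. piece_iso a (\<Phi> a) s"
    by (rule bchoice)
  then obtain \<Phi> where "\<forall>a\<in>A. \<exists>s. piece_iso a (\<Phi> a) s" ..
  then have "\<exists>S. \<forall>a\<in>A. piece_iso a (\<Phi> a) (S a)"
    by (rule bchoice)
  then obtain S where "\<forall>a\<in>A. piece_iso a (\<Phi> a) (S a)" ..
  then have bij: "\<And>a. a \<in> A \<Longrightarrow> bij_betw (\<Phi> a) {x\<in>X. \<beta> x = a} (fst (R a))"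
    and nz: "\<And>x. x \<in> X \<Longrightarrow> S (\<beta> x) x \<noteq> 0"
    and intw: "\<And>g x x'. \<lbrakk>g \<in> G; x \<in> X; x' \<in> X; \<beta> x = \<beta> x'\<rbrakk> \<Longrightarrow>
      snd (R (\<beta> x)) g (\<Phi> (\<beta> x) x') (\<Phi> (\<beta> x) x) * S (\<beta> x) x = S (\<beta> x) x' * K g x' x"
    using \<beta> unfolding piece_iso_def by auto
  have "finite (fst (R a))" if "a \<in> A" for a
    using pieces[OF that] unfolding monomial_iso_def by simp
  then have "finite (fst (dsum A R))"
    using \<open>finite A\<close> by (simp add: dsum_def)
  moreover have "bij_betw (\<lambda>x. (\<beta> x, \<Phi> (\<beta> x) x)) X (fst (dsum A R))"
    unfolding dsum_def fst_conv using \<beta> bij by (rule bij_betw_fibrewise)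
  moreover have "snd (dsum A R) g (\<beta> x', \<Phi> (\<beta> x') x') (\<beta> x, \<Phi> (\<beta> x) x) * S (\<beta> x) x
      = S (\<beta> x') x' * K g x' x" if "g \<in> G" "x \<in> X" "x' \<in> X" for g x x'
    using that intw block_diagonal by (cases "\<beta> x = \<beta> x'") (auto simp: dsum_def)
  ultimately show ?thesis
    unfolding monomial_iso_def using \<open>finite X\<close> \<beta> nz
    by (intro conjI exI[where x = "\<lambda>x. (\<beta> x, \<Phi> (\<beta> x) x)"] exI[where x = "\<lambda>x. S (\<beta> x) x"]) auto
qed

section \<open>Transitive monomial actions are induced\<close>

text \<open>A basis \<open>X\<close> permuted by \<open>G\<close> up to the nonzero scalars \<open>coef\<close>: \<open>g \<cdot> x = coef g x \<cdot> act g x\<close>.\<close>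

locale monomial_action = group G for G :: "('g, 'b) monoid_scheme" (structure) +
  fixes X :: "'x set" and act :: "'g \<Rightarrow> 'x \<Rightarrow> 'x" and coef :: "'g \<Rightarrow> 'x \<Rightarrow> complex"
  assumes act_closed: "\<lbrakk>g \<in> carrier G; x \<in> X\<rbrakk> \<Longrightarrow> act g x \<in> X"
    and act_mult: "\<lbrakk>g \<in> carrier G; h \<in> carrier G; x \<in> X\<rbrakk> \<Longrightarrow> act (g \<otimes> h) x = act g (act h x)"
    and act_one: "x \<in> X \<Longrightarrow> act \<one> x = x"
    and coef_mult:
      "\<lbrakk>g \<in> carrier G; h \<in> carrier G; x \<in> X\<rbrakk> \<Longrightarrow> coef (g \<otimes> h) x = coef g (act h x) * coef h x"
    and coef_nonzero: "\<lbrakk>g \<in> carrier G; x \<in> X\<rbrakk> \<Longrightarrow> coef g x \<noteq> 0"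
begin

lemma act_inv_act: "\<lbrakk>g \<in> carrier G; x \<in> X\<rbrakk> \<Longrightarrow> act (inv g) (act g x) = x"
  using act_mult[of "inv g" g x] act_one by simp

lemma monomial_action_restrict:
  assumes "\<And>g x. \<lbrakk>g \<in> carrier G; x \<in> X\<rbrakk> \<Longrightarrow> \<beta> (act g x) = \<beta> x"
  shows "monomial_action G {x\<in>X. \<beta> x = a} act coef"
  by unfold_locales (simp_all add: assms act_closed act_mult act_one coef_mult coef_nonzero)

end

locale transitive_monomial_action = monomial_action G X act coef
  for G :: "('g, 'b) monoid_scheme" (structure) and X :: "'x set" and act coef +
  fixes x0 :: 'x
  assumes base_in: "x0 \<in> X" and transitive: "x \<in> X \<Longrightarrow> \<exists>g\<in>carrier G. act g x0 = x"
begin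

text \<open>\<open>orbit_coset x0\<close> is the stabiliser of \<open>x0\<close> and \<open>orbit_coset x\<close> is a left coset of it;
  \<open>coset_rep\<close> picks the same representative as \<open>ind_char\<close> does.\<close>

definition orbit_coset :: "'x \<Rightarrow> 'g set" where
  "orbit_coset x = {g\<in>carrier G. act g x0 = x}"

definition coset_rep :: "'x \<Rightarrow> 'g" where
  "coset_rep x = (SOME g. g \<in> orbit_coset x)"

lemma orbit_coset_eq:
  assumes "g \<in> carrier G" "act g x0 = x"
  shows "orbit_coset x = (\<lambda>h. g \<otimes> h) ` orbit_coset x0"
proof
  show "orbit_coset x \<subseteq> (\<lambda>h. g \<otimes> h) ` orbit_coset x0"
  proof
    fix k assume k: "k \<in> orbit_coset x"
    then have "inv g \<otimes> k \<in> orbit_coset x0" "g \<otimes> (inv g \<otimes> k) = k"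
      using assms act_inv_act base_in act_mult
      by (auto simp: orbit_coset_def m_assoc[symmetric])
    then show "k \<in> (\<lambda>h. g \<otimes> h) ` orbit_coset x0" by (metis image_eqI)
  qed
  show "(\<lambda>h. g \<otimes> h) ` orbit_coset x0 \<subseteq> orbit_coset x"
    using assms base_in act_mult by (auto simp: orbit_coset_def)
qed

lemma coset_rep: "x \<in> X \<Longrightarrow> coset_rep x \<in> carrier G \<and> act (coset_rep x) x0 = x"
  using transitive someI_ex[of "\<lambda>g. g \<in> orbit_coset x"]
  unfolding coset_rep_def orbit_coset_def by blast

lemma bij_orbit_coset:
  "bij_betw orbit_coset X ((\<lambda>g. (\<lambda>h. g \<otimes> h) ` orbit_coset x0) ` carrier G)"
proof (rule bij_betw_imageI)
  show "inj_on orbit_coset X"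
    by (rule inj_onI) (metis coset_rep coset_rep_def)
  show "orbit_coset ` X = (\<lambda>g. (\<lambda>h. g \<otimes> h) ` orbit_coset x0) ` carrier G"
    using coset_rep orbit_coset_eq act_closed base_in by (auto simp: image_iff) metis+
qed

lemma ind_char_orbit_coset:
  assumes chi: "\<And>h. h \<in> orbit_coset x0 \<Longrightarrow> chi h = coef h x0"
    and g: "g \<in> carrier G" and x: "x \<in> X" and x': "x' \<in> X"
  shows "snd (ind_char (\<otimes>) (carrier G) (orbit_coset x0) chi) g (orbit_coset x') (orbit_coset x)
    = (if x' = act g x then coef g x * coef (coset_rep x) x0 / coef (coset_rep x') x0 else 0)"
proof -
  define r r' where "r = coset_rep x" and "r' = coset_rep x'"
  have r: "r \<in> carrier G" "act r x0 = x" and r': "r' \<in> carrier G" "act r' x0 = x'"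
    using coset_rep x x' unfolding r_def r'_def by auto
  have entry: "snd (ind_char (\<otimes>) (carrier G) (orbit_coset x0) chi) g (orbit_coset x') (orbit_coset x)
    = (if \<exists>h\<in>orbit_coset x0. g \<otimes> r = r' \<otimes> h
       then chi (THE h. h \<in> orbit_coset x0 \<and> g \<otimes> r = r' \<otimes> h) else 0)"
    unfolding ind_char_def r_def r'_def coset_rep_def by simp
  show ?thesis
  proof (cases "x' = act g x")
    case True
    define h0 where "h0 = inv r' \<otimes> (g \<otimes> r)"
    have "act h0 x0 = act (inv r') (act g (act r x0))"
      using r r' g base_in act_closed by (simp add: h0_def act_mult)
    also have "\<dots> = x0"
      using r r' True act_inv_act[OF r'(1) base_in] by simp
    finally have h0: "h0 \<in> orbit_coset x0" "g \<otimes> r = r' \<otimes> h0"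
      using r r' g by (auto simp: h0_def orbit_coset_def m_assoc[symmetric])
    have the_h0: "(THE h. h \<in> orbit_coset x0 \<and> g \<otimes> r = r' \<otimes> h) = h0"
      using h0 r' by (intro the_equality) (auto simp: orbit_coset_def)
    have "coef r' x0 * coef h0 x0 = coef g x * coef r x0"
      using coef_mult[of r' h0 x0] coef_mult[of g r x0] h0 r r' g base_in
      by (simp add: orbit_coset_def)
    then have "chi h0 = coef g x * coef r x0 / coef r' x0"
      using chi h0 coef_nonzero r' base_in by (simp add: field_simps)
    then show ?thesis
      unfolding entry the_h0 using True h0 r_def r'_def by auto
  next
    case False
    have "\<not> (\<exists>h\<in>orbit_coset x0. g \<otimes> r = r' \<otimes> h)"
      using False r r' g act_mult base_in by (auto simp: orbit_coset_def) metis
    then show ?thesis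
      unfolding entry using False by simp
  qed
qed

theorem monomial_iso_ind_char:
  assumes "finite X"
    and chi: "\<And>h. h \<in> orbit_coset x0 \<Longrightarrow> chi h = coef h x0"
    and K: "\<And>g x x'. \<lbrakk>g \<in> carrier G; x \<in> X; x' \<in> X\<rbrakk> \<Longrightarrow> K g x' x = (if x' = act g x then coef g x else 0)"
  shows "monomial_iso (carrier G) (X, K) (ind_char (\<otimes>) (carrier G) (orbit_coset x0) chi)"
proof -
  have "finite (fst (ind_char (\<otimes>) (carrier G) (orbit_coset x0) chi))"
    using bij_orbit_coset \<open>finite X\<close> by (simp add: ind_char_def bij_betw_finite)
  moreover have "bij_betw orbit_coset X (fst (ind_char (\<otimes>) (carrier G) (orbit_coset x0) chi))"
    using bij_orbit_coset by (simp add: ind_char_def)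
  \<comment> \<open>\<open>coset_rep x \<cdot> x0 = coef (coset_rep x) x0 \<cdot> x\<close>, hence the scaling\<close>
  moreover have "\<forall>x\<in>X. 1 / coef (coset_rep x) x0 \<noteq> 0"
    using coset_rep coef_nonzero base_in by simp
  moreover have "snd (ind_char (\<otimes>) (carrier G) (orbit_coset x0) chi) g (orbit_coset x') (orbit_coset x)
      * (1 / coef (coset_rep x) x0) = 1 / coef (coset_rep x') x0 * K g x' x"
    if "g \<in> carrier G" "x \<in> X" "x' \<in> X" for g x x'
    using that ind_char_orbit_coset[OF chi] K coset_rep coef_nonzero base_in by simp
  ultimately show ?thesis
    unfolding monomial_iso_def using \<open>finite X\<close>
    by (intro conjI exI[where x = orbit_coset] exI[where x = "\<lambda>x. 1 / coef (coset_rep x) x0"]) auto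
qed

end

section \<open>Tensor products of symmetric powers\<close>

text \<open>A basis vector is a tuple of monomials in \<open>x\<^sub>0, \<dots>, x\<^sub>n\<^sub>-\<^sub>1\<close>, the \<open>i\<close>-th of degree \<open>k\<^sub>i\<close>,
  each monomial being the multiset of its variables.\<close>

definition sym_tensor_basis :: "nat \<Rightarrow> nat list \<Rightarrow> nat multiset list set" where
  "sym_tensor_basis n ks = {xs. length xs = length ks \<and>
     (\<forall>i<length ks. set_mset (xs ! i) \<subseteq> {..<n} \<and> size (xs ! i) = ks ! i)}"

definition perm_monomials :: "nat \<Rightarrow> cmat \<Rightarrow> nat multiset list \<Rightarrow> nat multiset list" where
  "perm_monomials n g = map (image_mset (mono_perm n g))"

definition mono_weight :: "nat \<Rightarrow> cmat \<Rightarrow> nat multiset \<Rightarrow> complex" where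
  "mono_weight n g M = (\<Prod>a\<in>#M. mono_entry n g a)"

definition monomial_coef :: "nat \<Rightarrow> cmat \<Rightarrow> nat multiset list \<Rightarrow> complex" where
  "monomial_coef n g xs = mono_weight n g (sum_list xs)"

lemma prod_list_map_nth: "prod_list (map f xs) = (\<Prod>i<length xs. f (xs ! i))"
  by (induction xs) (simp_all add: prod.lessThan_Suc_shift del: prod.lessThan_Suc)

lemma image_mset_sum_list: "image_mset f (sum_list xs) = sum_list (map (image_mset f) xs)"
  by (induction xs) auto

lemma prod_mset_image_eq_prod_count:
  assumes "finite A" "set_mset M \<subseteq> A"
  shows "(\<Prod>a\<in>#M. f a) = (\<Prod>a\<in>A. f a ^ count M a)"
  unfolding image_prod_mset_multiplicity using assms
  by (intro prod.mono_neutral_left) (auto simp: not_in_iff)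

lemma size_eq_sum_count:
  assumes "finite A" "set_mset M \<subseteq> A"
  shows "size M = (\<Sum>a\<in>A. count M a)"
  unfolding size_multiset_overloaded_eq using assms
  by (intro sum.mono_neutral_left) (auto simp: not_in_iff)

lemma symrep_defrep_entry:
  assumes g: "g \<in> monomial_group n" and "size \<alpha> = k"
  shows "snd (symrep k (defrep n)) g \<beta> \<alpha>
    = (if \<beta> = image_mset (mono_perm n g) \<alpha> then mono_weight n g \<alpha> else 0)"
proof -
  define xs where "xs = (SOME xs. mset xs = \<alpha>)"
  have xs: "\<alpha> = mset xs" unfolding xs_def using ex_mset by (metis (mono_tags) someI_ex)
  then have len: "length xs = k" using \<open>size \<alpha> = k\<close> by simp
  define ys0 where "ys0 = map (mono_perm n g) xs"
  define S where "S = {ys. length ys = k \<and> mset ys = \<beta>}"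
  have "finite S"
    by (rule finite_subset[of _ "{ys. set ys \<subseteq> set_mset \<beta> \<and> length ys = k}"])
      (auto simp: S_def intro: finite_lists_length_eq)
  have summand: "(\<Prod>i<k. g (ys ! i) (xs ! i)) = (if ys = ys0 then mono_weight n g \<alpha> else 0)"
    if "length ys = k" for ys
  proof (cases "ys = ys0")
    case True
    have "(\<Prod>i<k. g (ys0 ! i) (xs ! i)) = (\<Prod>i<k. mono_entry n g (xs ! i))"
      by (intro prod.cong refl) (simp add: ys0_def mono_entry_def len)
    also have "\<dots> = mono_weight n g \<alpha>"
      unfolding mono_weight_def xs mset_map[symmetric] prod_mset_prod_list prod_list_map_nth len ..
    finally show ?thesis using True by simp
  next
    case False
    have "\<exists>i<k. ys ! i \<noteq> ys0 ! i"
      using False that len by (auto simp: list_eq_iff_nth_eq ys0_def)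
    then obtain i where "i < k" "ys ! i \<noteq> mono_perm n g (xs ! i)"
      by (auto simp: ys0_def len)
    then have "g (ys ! i) (xs ! i) = 0"
      using mono_perm_eq[OF g, of "ys ! i" "xs ! i"] by auto
    then show ?thesis using False \<open>i < k\<close> by (auto intro!: prod_zero bexI[where x = i])
  qed
  have "snd (symrep k (defrep n)) g \<beta> \<alpha> = (\<Sum>ys\<in>S. \<Prod>i<k. g (ys ! i) (xs ! i))"
    unfolding symrep_def defrep_def S_def xs_def Let_def by simp
  also have "\<dots> = (\<Sum>ys\<in>S. if ys = ys0 then mono_weight n g \<alpha> else 0)"
    using summand by (intro sum.cong) (auto simp: S_def)
  also have "\<dots> = (if ys0 \<in> S then mono_weight n g \<alpha> else 0)"
    using \<open>finite S\<close> by simp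
  also have "ys0 \<in> S \<longleftrightarrow> \<beta> = image_mset (mono_perm n g) \<alpha>"
    by (auto simp: S_def ys0_def len xs)
  finally show ?thesis .
qed

lemma fst_tensor_sym_powers:
  "fst (tensor_list (map (\<lambda>k. symrep k (defrep n)) ks)) = sym_tensor_basis n ks"
  unfolding tensor_list_def symrep_def defrep_def sym_tensor_basis_def by simp

lemma snd_tensor_sym_powers:
  assumes g: "g \<in> monomial_group n" and xs: "xs \<in> sym_tensor_basis n ks" and ys: "ys \<in> sym_tensor_basis n ks"
  shows "snd (tensor_list (map (\<lambda>k. symrep k (defrep n)) ks)) g ys xs
    = (if ys = perm_monomials n g xs then monomial_coef n g xs else 0)"
proof -
  have len: "length xs = length ks" "length ys = length ks"
    using xs ys by (auto simp: sym_tensor_basis_def)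
  have "snd (tensor_list (map (\<lambda>k. symrep k (defrep n)) ks)) g ys xs
      = (\<Prod>i<length ks. if ys ! i = image_mset (mono_perm n g) (xs ! i) then mono_weight n g (xs ! i) else 0)"
    unfolding tensor_list_def snd_conv length_map using xs symrep_defrep_entry[OF g]
    by (intro prod.cong refl) (simp add: sym_tensor_basis_def)
  also have "\<dots> = (if ys = perm_monomials n g xs then monomial_coef n g xs else 0)"
  proof (cases "ys = perm_monomials n g xs")
    case True
    have "monomial_coef n g xs = prod_list (map (mono_weight n g) xs)"
      by (induction xs) (simp_all add: monomial_coef_def mono_weight_def)
    then show ?thesis
      using True len by (simp add: perm_monomials_def prod_list_map_nth)
  next
    case False
    have "\<exists>i<length ks. ys ! i \<noteq> perm_monomials n g xs ! i"
      using False len by (auto simp: list_eq_iff_nth_eq perm_monomials_def)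
    then obtain i where "i < length ks" "ys ! i \<noteq> image_mset (mono_perm n g) (xs ! i)"
      by (auto simp: perm_monomials_def len)
    then show ?thesis using False by (auto intro!: prod_zero bexI[where x = i])
  qed
  finally show ?thesis .
qed

lemma sym_tensor_basis_lt:
  "\<lbrakk>xs \<in> sym_tensor_basis n ks; M \<in> set xs; a \<in># M\<rbrakk> \<Longrightarrow> a < n"
  unfolding sym_tensor_basis_def by (auto simp: in_set_conv_nth)

lemma sum_list_sym_tensor_basis_lt:
  "\<lbrakk>xs \<in> sym_tensor_basis n ks; a \<in># sum_list xs\<rbrakk> \<Longrightarrow> a < n"
  using sym_tensor_basis_lt by auto

lemma finite_sym_tensor_basis: "finite (sym_tensor_basis n ks)"
proof (rule finite_subset)
  let ?M = "\<Union>i<length ks. multisets_of_size {..<n} (ks ! i)"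
  show "sym_tensor_basis n ks \<subseteq> {xs. set xs \<subseteq> ?M \<and> length xs = length ks}"
  proof safe
    fix xs M assume xs: "xs \<in> sym_tensor_basis n ks" and "M \<in> set xs"
    then obtain i where "i < length ks" "M = xs ! i"
      by (auto simp: sym_tensor_basis_def in_set_conv_nth)
    then show "M \<in> ?M"
      using xs by (auto simp: sym_tensor_basis_def multisets_of_size_def)
  qed (simp add: sym_tensor_basis_def)
  show "finite {xs. set xs \<subseteq> ?M \<and> length xs = length ks}"
    by (intro finite_lists_length_eq) auto
qed

lemma perm_monomials_closed:
  assumes "g \<in> monomial_group n" "xs \<in> sym_tensor_basis n ks"
  shows "perm_monomials n g xs \<in> sym_tensor_basis n ks"
  using assms mono_perm_lt unfolding sym_tensor_basis_def perm_monomials_def by fastforce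

lemma perm_monomials_mmul:
  assumes g: "g \<in> monomial_group n" and h: "h \<in> monomial_group n" and xs: "xs \<in> sym_tensor_basis n ks"
  shows "perm_monomials n (mmul n g h) xs = perm_monomials n g (perm_monomials n h xs)"
proof -
  have "image_mset (mono_perm n (mmul n g h)) M = image_mset (mono_perm n g) (image_mset (mono_perm n h) M)"
    if "M \<in> set xs" for M
    unfolding image_mset.compositionality
    using sym_tensor_basis_lt[OF xs that] mono_perm_mmul[OF g h] by (intro image_mset_cong) simp
  then show ?thesis
    unfolding perm_monomials_def by simp
qed

lemma perm_monomials_one:
  assumes "xs \<in> sym_tensor_basis n ks"
  shows "perm_monomials n (mono_one n) xs = xs"
proof -
  have "image_mset (mono_perm n (mono_one n)) M = image_mset id M" if "M \<in> set xs" for M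
    using sym_tensor_basis_lt[OF assms that] mono_perm_one by (intro image_mset_cong) simp
  then show ?thesis
    unfolding perm_monomials_def by (simp add: map_idI)
qed

lemma monomial_coef_mmul:
  assumes g: "g \<in> monomial_group n" and h: "h \<in> monomial_group n" and xs: "xs \<in> sym_tensor_basis n ks"
  shows "monomial_coef n (mmul n g h) xs = monomial_coef n g (perm_monomials n h xs) * monomial_coef n h xs"
proof -
  have "monomial_coef n (mmul n g h) xs
      = (\<Prod>a\<in>#sum_list xs. mono_entry n g (mono_perm n h a) * mono_entry n h a)"
    unfolding monomial_coef_def mono_weight_def
    using sum_list_sym_tensor_basis_lt[OF xs] mono_entry_mmul[OF g h]
    by (intro arg_cong[where f = prod_mset] image_mset_cong) simp
  also have "\<dots> = monomial_coef n g (perm_monomials n h xs) * monomial_coef n h xs"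
    by (simp add: monomial_coef_def mono_weight_def perm_monomials_def prod_mset.distrib
        image_mset_sum_list[symmetric] image_mset.compositionality comp_def)
  finally show ?thesis .
qed

lemma monomial_coef_nonzero:
  "\<lbrakk>g \<in> monomial_group n; xs \<in> sym_tensor_basis n ks\<rbrakk> \<Longrightarrow> monomial_coef n g xs \<noteq> 0"
  using sum_list_sym_tensor_basis_lt mono_entry_nonzero
  unfolding monomial_coef_def mono_weight_def by fastforce

lemma monomial_action_sym_tensor:
  "monomial_action (mono_grp n) (sym_tensor_basis n ks) (perm_monomials n) (monomial_coef n)"
  by (intro monomial_action.intro group_mono_grp monomial_action_axioms.intro)
    (simp_all add: perm_monomials_closed perm_monomials_mmul perm_monomials_one
      monomial_coef_mmul monomial_coef_nonzero)

section \<open>Exponent vectors and orbits\<close>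

definition var_degrees :: "nat multiset list \<Rightarrow> nat \<Rightarrow> nat list" where
  "var_degrees xs a = map (\<lambda>M. count M a) xs"

definition degree_array :: "nat \<Rightarrow> nat list \<Rightarrow> nat multiset list \<Rightarrow> nat list \<Rightarrow> nat" where
  "degree_array n ks xs v = (if v \<in> arr_index ks then card {a\<in>{..<n}. var_degrees xs a = v} else 0)"

lemma finite_arr_index: "finite (arr_index ks)"
proof (rule finite_subset)
  show "arr_index ks \<subseteq> {is. set is \<subseteq> {..sum_list ks} \<and> length is = length ks}"
    unfolding arr_index_def
    by (auto simp: in_set_conv_nth) (metis elem_le_sum_list order_trans)
  show "finite {is. set is \<subseteq> {..sum_list ks} \<and> length is = length ks}"
    by (rule finite_lists_length_eq) simp
qed

lemma sum_eq_sum_card_fibres: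
  fixes w :: "'b \<Rightarrow> nat"
  assumes "finite S" "finite T" "\<And>a. \<lbrakk>a \<in> S; f a \<notin> T\<rbrakk> \<Longrightarrow> w (f a) = 0"
  shows "(\<Sum>a\<in>S. w (f a)) = (\<Sum>t\<in>T. w t * card {a\<in>S. f a = t})"
proof -
  have "(\<Sum>t\<in>T. w t * card {a\<in>S. f a = t}) = (\<Sum>t\<in>T. \<Sum>a\<in>S. if f a = t then w t else 0)"
    using \<open>finite S\<close> by (simp add: sum.If_cases mult.commute Int_def)
  also have "\<dots> = (\<Sum>a\<in>S. \<Sum>t\<in>T. if f a = t then w t else 0)"
    by (rule sum.swap)
  also have "\<dots> = (\<Sum>a\<in>S. w (f a))"
    using assms by (intro sum.cong refl) (auto simp: sum.delta')
  finally show ?thesis by simp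
qed

context
  fixes xs n ks assumes xs: "xs \<in> sym_tensor_basis n ks"
begin

lemma length_var_degrees: "length (var_degrees xs a) = length ks"
  using xs by (simp add: var_degrees_def sym_tensor_basis_def)

lemma nth_var_degrees: "j < length ks \<Longrightarrow> var_degrees xs a ! j = count (xs ! j) a"
  using xs by (simp add: var_degrees_def sym_tensor_basis_def)

lemma var_degrees_cases: "var_degrees xs a \<in> arr_index ks \<or> var_degrees xs a = replicate (length ks) 0"
proof -
  have "count (xs ! j) a \<le> ks ! j" if "j < length ks" for j
    using xs that count_le_size[of "xs ! j" a] by (simp add: sym_tensor_basis_def)
  then show ?thesis
    by (auto simp: arr_index_def length_var_degrees nth_var_degrees)
qed

lemma var_degrees_out_of_range: "n \<le> a \<Longrightarrow> var_degrees xs a = replicate (length ks) 0"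
  using sym_tensor_basis_lt[OF xs] length_var_degrees
  by (auto simp: var_degrees_def list_eq_iff_nth_eq not_in_iff[symmetric]) (metis leD nth_mem)

lemma sum_var_degrees: "(\<Sum>a<n. var_degrees xs a ! j) = ks ! j" if "j < length ks"
proof -
  have "(\<Sum>a<n. var_degrees xs a ! j) = (\<Sum>a<n. count (xs ! j) a)"
    using that by (simp add: nth_var_degrees)
  also have "\<dots> = size (xs ! j)"
    using xs that by (intro size_eq_sum_count[symmetric]) (auto simp: sym_tensor_basis_def)
  finally show ?thesis
    using xs that by (simp add: sym_tensor_basis_def)
qed

lemma card_nonzero_var_degrees:
  "card {a\<in>{..<n}. var_degrees xs a \<in> arr_index ks} = (\<Sum>v\<in>arr_index ks. degree_array n ks xs v)"
  using sum_eq_sum_card_fibres[of "{a\<in>{..<n}. var_degrees xs a \<in> arr_index ks}" "arr_index ks"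
      "var_degrees xs" "\<lambda>_. 1::nat"]
  by (simp add: finite_arr_index degree_array_def conj_commute cong: conj_cong)

lemma degree_array_in_arrays: "degree_array n ks xs \<in> arrays n ks"
proof -
  have "(\<Sum>v\<in>arr_index ks. v ! j * degree_array n ks xs v) = ks ! j" if "j < length ks" for j
  proof -
    have "var_degrees xs a ! j = 0" if "var_degrees xs a \<notin> arr_index ks" for a
      using var_degrees_cases[of a] that \<open>j < length ks\<close> by auto
    then have "(\<Sum>a<n. var_degrees xs a ! j)
        = (\<Sum>v\<in>arr_index ks. v ! j * card {a\<in>{..<n}. var_degrees xs a = v})"
      by (intro sum_eq_sum_card_fibres) (simp_all add: finite_arr_index)
    then have "(\<Sum>v\<in>arr_index ks. v ! j * degree_array n ks xs v) = (\<Sum>a<n. var_degrees xs a ! j)"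
      by (simp add: degree_array_def)
    then show ?thesis using sum_var_degrees[OF that] by simp
  qed
  moreover have "(\<Sum>v\<in>arr_index ks. degree_array n ks xs v) \<le> n"
    unfolding card_nonzero_var_degrees[symmetric] by (rule order_trans[OF card_mono[of "{..<n}"]]) auto
  ultimately show ?thesis
    unfolding arrays_def by (auto simp: degree_array_def)
qed

lemma count_sum_list: "count (sum_list xs) a = sum_list (var_degrees xs a)"
  by (induction xs) (simp_all add: var_degrees_def)

lemma monomial_coef_eq_prod:
  assumes "g \<in> monomial_group n"
  shows "monomial_coef n g xs = (\<Prod>a<n. mono_entry n g a ^ sum_list (var_degrees xs a))"
  unfolding monomial_coef_def mono_weight_def count_sum_list[symmetric]
  using sum_list_sym_tensor_basis_lt[OF xs] by (intro prod_mset_image_eq_prod_count) auto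

end

lemma count_image_mset_inj_on:
  assumes "inj_on f A" "set_mset M \<subseteq> A" "a \<in> A"
  shows "count (image_mset f M) (f a) = count M a"
proof -
  have "f -` {f a} \<inter> set_mset M = (if a \<in># M then {a} else {})"
    using assms by (auto dest: inj_onD)
  then show ?thesis
    unfolding count_image_mset by (auto simp: not_in_iff)
qed

context
  fixes n g assumes g: "g \<in> monomial_group n"
begin

lemma var_degrees_perm_monomials:
  assumes "xs \<in> sym_tensor_basis n ks" "a < n"
  shows "var_degrees (perm_monomials n g xs) (mono_perm n g a) = var_degrees xs a"
  unfolding var_degrees_def perm_monomials_def map_map comp_def
  using count_image_mset_inj_on[OF inj_on_mono_perm[OF g]] sym_tensor_basis_lt[OF assms(1)] assms(2)
  by (intro map_cong refl) (simp add: subset_iff)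

lemma degree_array_perm_monomials:
  assumes xs: "xs \<in> sym_tensor_basis n ks"
  shows "degree_array n ks (perm_monomials n g xs) = degree_array n ks xs"
proof -
  have fibre: "{a\<in>{..<n}. var_degrees (perm_monomials n g xs) a = v}
      = mono_perm n g ` {a\<in>{..<n}. var_degrees xs a = v}" for v
  proof
    show "{a\<in>{..<n}. var_degrees (perm_monomials n g xs) a = v} \<subseteq> mono_perm n g ` {a\<in>{..<n}. var_degrees xs a = v}"
      using mono_perm_surj[OF g] var_degrees_perm_monomials[OF xs] by fastforce
    show "mono_perm n g ` {a\<in>{..<n}. var_degrees xs a = v} \<subseteq> {a\<in>{..<n}. var_degrees (perm_monomials n g xs) a = v}"
      using mono_perm_lt[OF g] var_degrees_perm_monomials[OF xs] by auto
  qed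
  have inj: "inj_on (mono_perm n g) {a\<in>{..<n}. var_degrees xs a = v}" for v
    using inj_on_mono_perm[OF g] by (rule inj_on_subset) auto
  show ?thesis
    unfolding degree_array_def fibre card_image[OF inj] ..
qed

end

lemma sym_tensor_basis_eqI:
  assumes xs: "xs \<in> sym_tensor_basis n ks" and ys: "ys \<in> sym_tensor_basis n ks"
    and "\<And>a. a < n \<Longrightarrow> var_degrees xs a = var_degrees ys a"
  shows "xs = ys"
proof -
  have "var_degrees xs a = var_degrees ys a" for a
    using assms var_degrees_out_of_range[OF xs] var_degrees_out_of_range[OF ys] by (cases "a < n") auto
  then have "count (xs ! j) a = count (ys ! j) a" if "j < length ks" for j a
    using nth_var_degrees[OF xs that] nth_var_degrees[OF ys that] by metis
  then show ?thesis
    using xs ys by (auto simp: sym_tensor_basis_def list_eq_iff_nth_eq multiset_eq_iff)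
qed

lemma perm_monomials_eq_self_iff:
  assumes g: "g \<in> monomial_group n" and xs: "xs \<in> sym_tensor_basis n ks"
  shows "perm_monomials n g xs = xs \<longleftrightarrow> (\<forall>a<n. var_degrees xs (mono_perm n g a) = var_degrees xs a)"
proof
  assume "perm_monomials n g xs = xs"
  then show "\<forall>a<n. var_degrees xs (mono_perm n g a) = var_degrees xs a"
    using var_degrees_perm_monomials[OF g xs] by metis
next
  assume fixed: "\<forall>a<n. var_degrees xs (mono_perm n g a) = var_degrees xs a"
  show "perm_monomials n g xs = xs"
  proof (rule sym_tensor_basis_eqI[OF perm_monomials_closed[OF g xs] xs])
    fix b assume "b < n"
    then obtain a where "a < n" "mono_perm n g a = b"
      using mono_perm_surj[OF g] by blast
    then show "var_degrees (perm_monomials n g xs) b = var_degrees xs b"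
      using var_degrees_perm_monomials[OF g xs] fixed by metis
  qed
qed

lemma card_fibres_eq_imp_perm:
  fixes F F' :: "nat \<Rightarrow> 'v"
  assumes "\<And>v. card {a\<in>{..<n}. F a = v} = card {a\<in>{..<n}. F' a = v}"
  shows "\<exists>\<pi>. bij_betw \<pi> {..<n} {..<n} \<and> (\<forall>a<n. F' (\<pi> a) = F a)"
proof -
  have "\<exists>h. bij_betw h {a\<in>{..<n}. F a = v} {a\<in>{..<n}. F' a = v}" for v
    using assms[of v] by (intro finite_same_card_bij) auto
  then obtain h where h: "\<And>v. bij_betw (h v) {a\<in>{..<n}. F a = v} {a\<in>{..<n}. F' a = v}"
    by metis
  define \<pi> where "\<pi> a = h (F a) a" for a
  have \<pi>: "\<pi> a < n \<and> F' (\<pi> a) = F a" if "a < n" for a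
    using bij_betwE[OF h[of "F a"]] that by (auto simp: \<pi>_def)
  have "inj_on \<pi> {..<n}"
  proof
    fix a b assume "a \<in> {..<n}" "b \<in> {..<n}" "\<pi> a = \<pi> b"
    moreover from this have "F a = F b" using \<pi> by (metis lessThan_iff)
    ultimately show "a = b"
      using bij_betw_imp_inj_on[OF h[of "F a"]] by (auto simp: \<pi>_def dest: inj_onD)
  qed
  then have "bij_betw \<pi> {..<n} {..<n}"
    using \<pi> by (simp add: bij_betw_def endo_inj_surj image_subset_iff)
  then show ?thesis using \<pi> by blast
qed

definition perm_mat :: "nat \<Rightarrow> (nat \<Rightarrow> nat) \<Rightarrow> cmat" where
  "perm_mat n \<pi> = (\<lambda>i j. if j < n \<and> i = \<pi> j then 1 else 0)"

context
  fixes n :: nat and \<pi> :: "nat \<Rightarrow> nat" assumes \<pi>: "bij_betw \<pi> {..<n} {..<n}"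
begin

lemma perm_mat_closed: "perm_mat n \<pi> \<in> monomial_group n"
proof (rule monomial_groupI)
  fix i assume "i < n"
  then obtain j where "j < n" "\<pi> j = i"
    using \<pi> by (metis bij_betw_iff_bijections lessThan_iff)
  then show "\<exists>!j. j < n \<and> perm_mat n \<pi> i j \<noteq> 0"
    using \<pi> by (auto simp: perm_mat_def bij_betw_def dest: inj_onD)
qed (use bij_betwE[OF \<pi>] in \<open>auto simp: perm_mat_def split: if_splits\<close>)

lemma mono_perm_perm_mat: "a < n \<Longrightarrow> mono_perm n (perm_mat n \<pi>) a = \<pi> a"
  by (rule mono_perm_eq[OF perm_mat_closed]) (simp add: perm_mat_def)

end

lemma card_fibres_eq_if_degree_array_eq:
  assumes xs: "xs \<in> sym_tensor_basis n ks" and ys: "ys \<in> sym_tensor_basis n ks"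
    and eq: "degree_array n ks xs = degree_array n ks ys"
  shows "card {a\<in>{..<n}. var_degrees xs a = v} = card {a\<in>{..<n}. var_degrees ys a = v}"
proof -
  let ?zero = "replicate (length ks) 0"
  \<comment> \<open>the array does not record the zero exponent vector, whose fibre is the complement\<close>
  have zero_notin: "?zero \<notin> arr_index ks"
    by (simp add: arr_index_def)
  have card_zero: "card {a\<in>{..<n}. var_degrees zs a = ?zero}
      = n - (\<Sum>v\<in>arr_index ks. degree_array n ks zs v)" if zs: "zs \<in> sym_tensor_basis n ks" for zs
  proof -
    have "{a\<in>{..<n}. var_degrees zs a = ?zero} = {..<n} - {a\<in>{..<n}. var_degrees zs a \<in> arr_index ks}"
      using var_degrees_cases[OF zs] zero_notin by auto
    moreover have "card ({..<n} - {a\<in>{..<n}. var_degrees zs a \<in> arr_index ks})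
        = n - card {a\<in>{..<n}. var_degrees zs a \<in> arr_index ks}"
      by (subst card_Diff_subset) auto
    ultimately show ?thesis
      unfolding card_nonzero_var_degrees[OF zs] by simp
  qed
  consider "v \<in> arr_index ks" | "v = ?zero" | "v \<notin> arr_index ks" "v \<noteq> ?zero" by blast
  then show ?thesis
  proof cases
    case 1
    then show ?thesis using fun_cong[OF eq, of v] by (simp add: degree_array_def)
  next
    case 2
    then show ?thesis using card_zero[OF xs] card_zero[OF ys] eq by simp
  next
    case 3
    then show ?thesis using var_degrees_cases[OF xs] var_degrees_cases[OF ys] by metis
  qed
qed

lemma degree_array_eq_imp_orbit:
  assumes xs: "xs \<in> sym_tensor_basis n ks" and ys: "ys \<in> sym_tensor_basis n ks"
    and eq: "degree_array n ks xs = degree_array n ks ys"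
  shows "\<exists>g\<in>monomial_group n. perm_monomials n g xs = ys"
proof -
  obtain \<pi> where \<pi>: "bij_betw \<pi> {..<n} {..<n}" and fibres: "\<And>a. a < n \<Longrightarrow> var_degrees ys (\<pi> a) = var_degrees xs a"
    using card_fibres_eq_imp_perm[of n "var_degrees xs" "var_degrees ys"]
      card_fibres_eq_if_degree_array_eq[OF xs ys eq] by blast
  have "perm_monomials n (perm_mat n \<pi>) xs = ys"
  proof (rule sym_tensor_basis_eqI[OF perm_monomials_closed[OF perm_mat_closed[OF \<pi>] xs] ys])
    fix b assume "b < n"
    then obtain a where "a < n" "\<pi> a = b"
      using \<pi> by (metis bij_betw_iff_bijections lessThan_iff)
    then show "var_degrees (perm_monomials n (perm_mat n \<pi>) xs) b = var_degrees ys b"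
      using var_degrees_perm_monomials[OF perm_mat_closed[OF \<pi>] xs] mono_perm_perm_mat[OF \<pi>] fibres
      by metis
  qed
  then show ?thesis using perm_mat_closed[OF \<pi>] by blast
qed

lemma finite_arrays: "finite (arrays n ks)"
proof (rule finite_subset)
  show "arrays n ks \<subseteq> {B. \<forall>v. (v \<in> arr_index ks \<longrightarrow> B v \<in> {..n}) \<and> (v \<notin> arr_index ks \<longrightarrow> B v = 0)}"
  proof (intro subsetI CollectI allI conjI impI)
    fix B v assume B: "B \<in> arrays n ks"
    then show "v \<notin> arr_index ks \<Longrightarrow> B v = 0" by (simp add: arrays_def)
    assume "v \<in> arr_index ks"
    then have "B v \<le> (\<Sum>v\<in>arr_index ks. B v)"
      by (intro member_le_sum) (simp_all add: finite_arr_index)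
    then show "B v \<in> {..n}"
      using B by (simp add: arrays_def)
  qed
  show "finite {B. \<forall>v. (v \<in> arr_index ks \<longrightarrow> B v \<in> {..n}) \<and> (v \<notin> arr_index ks \<longrightarrow> B v = (0::nat))}"
    by (rule finite_set_of_finite_funs) (simp_all add: finite_arr_index)
qed

definition block_of :: "nat list \<Rightarrow> nat \<Rightarrow> nat" where
  "block_of nu a = (THE b. b < length nu \<and> a \<in> block nu b)"

lemma sum_list_take_mono: "b \<le> b' \<Longrightarrow> sum_list (take b nu) \<le> sum_list (take b' (nu :: nat list))"
  by (metis le_add_diff_inverse le_add1 sum_list_append take_add)

lemma card_block: "b < length nu \<Longrightarrow> card (block nu b) = nu ! b"
  by (simp add: block_def take_Suc_conv_app_nth)

lemma block_subset: "b < length nu \<Longrightarrow> block nu b \<subseteq> {..<sum_list nu}"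
  using sum_list_take_mono[of "Suc b" "length nu" nu] by (auto simp: block_def)

lemma block_unique: "\<lbrakk>a \<in> block nu b; a \<in> block nu b'\<rbrakk> \<Longrightarrow> b = b'"
  using sum_list_take_mono[of "Suc b" b' nu] sum_list_take_mono[of "Suc b'" b nu]
  by (cases b b' rule: linorder_cases) (auto simp: block_def)

lemma in_some_block: "a < sum_list nu \<Longrightarrow> \<exists>b<length nu. a \<in> block nu b"
proof (induction nu arbitrary: a)
  case (Cons x nu)
  show ?case
  proof (cases "a < x")
    case True
    then show ?thesis by (intro exI[of _ 0]) (simp add: block_def)
  next
    case False
    then have "a - x < sum_list nu"
      using Cons.prems by simp
    then obtain b where "b < length nu" "a - x \<in> block nu b"
      using Cons.IH by blast
    then show ?thesis
      using False by (intro exI[of _ "Suc b"]) (auto simp: block_def)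
  qed
qed simp

lemma block_of_eq: "\<lbrakk>b < length nu; a \<in> block nu b\<rbrakk> \<Longrightarrow> block_of nu a = b"
  unfolding block_of_def using block_unique by blast

lemma block_of: "a < sum_list nu \<Longrightarrow> block_of nu a < length nu \<and> a \<in> block nu (block_of nu a)"
  using in_some_block block_of_eq by metis

lemma Union_blocks: "(\<Union>b<length nu. block nu b) = {..<sum_list nu}"
  using block_subset in_some_block by fastforce

lemma block_eq_fibre: "b < length nu \<Longrightarrow> block nu b = {a\<in>{..<sum_list nu}. block_of nu a = b}"
  using block_subset block_of_eq block_of by fastforce

context
  fixes n :: nat and nu :: "nat list" assumes sum_nu: "sum_list nu = n"
begin

lemma block_subgroup_iff:
  "g \<in> block_subgroup n nu \<longleftrightarrow>
     g \<in> monomial_group n \<and> (\<forall>a<n. block_of nu (mono_perm n g a) = block_of nu a)"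
proof
  assume g: "g \<in> block_subgroup n nu"
  then have gG: "g \<in> monomial_group n" by (simp add: block_subgroup_def)
  moreover have "block_of nu (mono_perm n g a) = block_of nu a" if a: "a < n" for a
  proof -
    obtain b where "b < length nu" "mono_perm n g a \<in> block nu b" "a \<in> block nu b"
      using g mono_entry_nonzero[OF gG a] unfolding block_subgroup_def mono_entry_def by blast
    then show ?thesis by (simp add: block_of_eq)
  qed
  ultimately show "g \<in> monomial_group n \<and> (\<forall>a<n. block_of nu (mono_perm n g a) = block_of nu a)"
    by blast
next
  assume g: "g \<in> monomial_group n \<and> (\<forall>a<n. block_of nu (mono_perm n g a) = block_of nu a)"
  have "\<exists>b<length nu. i \<in> block nu b \<and> j \<in> block nu b" if "g i j \<noteq> 0" for i j
  proof -
    have "i < n" "j < n" "i = mono_perm n g j"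
      using monomial_group_nonzero_lt[of g n i j] mono_perm_eq[of g n i j] g that by auto
    then have "block_of nu i = block_of nu j"
      using g by simp
    then show ?thesis
      using block_of[of i nu] block_of[of j nu] \<open>i < n\<close> \<open>j < n\<close> sum_nu by metis
  qed
  then show "g \<in> block_subgroup n nu"
    using g by (simp add: block_subgroup_def)
qed

lemma block_char_eq_prod:
  assumes h: "h \<in> monomial_group n" and "length ws = length nu"
  shows "block_char n nu (map int ws) h = (\<Prod>a<n. mono_entry n h a ^ (ws ! block_of nu a))"
proof -
  have colent: "colent n h a = mono_entry n h a" if "a < n" for a
  proof -
    have "colent n h a = (\<Sum>i<n. if i = mono_perm n h a then mono_entry n h a else 0)"
      unfolding colent_def using that by (intro sum.cong refl) (subst monomial_group_entry[OF h], simp)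
    then show ?thesis
      using mono_perm_lt[OF h that] by simp
  qed
  have "block_char n nu (map int ws) h = (\<Prod>b<length nu. \<Prod>a\<in>block nu b. mono_entry n h a ^ (ws ! block_of nu a))"
    unfolding block_char_def
  proof (intro prod.cong refl)
    fix b assume b: "b \<in> {..<length nu}"
    then have "\<And>a. a \<in> block nu b \<Longrightarrow> colent n h a = mono_entry n h a \<and> block_of nu a = b"
      using block_subset[of b nu] colent block_of_eq sum_nu by auto
    then show "(\<Prod>a\<in>block nu b. colent n h a) powi (map int ws ! b)
        = (\<Prod>a\<in>block nu b. mono_entry n h a ^ (ws ! block_of nu a))"
      using b assms(2) by (simp add: power_int_of_nat prod_power_distrib)
  qed
  also have "\<dots> = (\<Prod>a\<in>(\<Union>b<length nu. block nu b). mono_entry n h a ^ (ws ! block_of nu a))"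
    by (rule prod.UNION_disjoint[symmetric]) (simp, simp add: block_def, use block_unique in blast)
  finally show ?thesis
    unfolding Union_blocks sum_nu .
qed

end

definition monomials_with_degrees :: "nat \<Rightarrow> nat \<Rightarrow> (nat \<Rightarrow> nat list) \<Rightarrow> nat multiset list" where
  "monomials_with_degrees n m F = map (\<lambda>j. \<Sum>a<n. replicate_mset (F a ! j) a) [0..<m]"

lemma var_degrees_monomials_with_degrees:
  "\<lbrakk>a < n; length (F a) = m\<rbrakk> \<Longrightarrow> var_degrees (monomials_with_degrees n m F) a = F a"
  by (simp add: var_degrees_def monomials_with_degrees_def count_sum list_eq_iff_nth_eq)

lemma monomials_with_degrees_in_basis:
  assumes "\<And>j. j < length ks \<Longrightarrow> (\<Sum>a<n. F a ! j) = ks ! j"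
  shows "monomials_with_degrees n (length ks) F \<in> sym_tensor_basis n ks"
proof -
  have "set_mset (\<Sum>a<n. replicate_mset (F a ! j) a) \<subseteq> {..<n}" for j
    by (auto simp: count_sum simp flip: count_greater_zero_iff split: if_splits)
  then show ?thesis
    using assms by (simp add: monomials_with_degrees_def sym_tensor_basis_def)
qed

definition block_label :: "nat list \<Rightarrow> 'v list \<Rightarrow> nat \<Rightarrow> 'v" where
  "block_label nu vs a = vs ! block_of nu a"

text \<open>The orbit of an array \<open>B\<close> has the base point in which the variables of the \<open>b\<close>-th block of
  \<open>nu\<close> all carry the exponent vector \<open>vs ! b\<close>.\<close>

context
  fixes n :: nat and ks :: "nat list" and nu :: "nat list" and vs :: "nat list list"
    and B :: "nat list \<Rightarrow> nat"
  assumes B: "B \<in> arrays n ks" and sum_nu: "sum_list nu = n" and len: "length vs = length nu"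
    and distinct: "distinct vs" and labels: "set vs \<subseteq> insert (replicate (length ks) 0) (arr_index ks)"
    and covers: "{v\<in>arr_index ks. B v \<noteq> 0} \<subseteq> set vs"
    and sizes: "\<And>b. \<lbrakk>b < length nu; vs ! b \<in> arr_index ks\<rbrakk> \<Longrightarrow> nu ! b = B (vs ! b)"
begin

lemma block_label_in_labels: "a < n \<Longrightarrow> block_label nu vs a \<in> set vs"
  using block_of[of a nu] sum_nu len by (simp add: block_label_def)

lemma length_block_label: "a < n \<Longrightarrow> length (block_label nu vs a) = length ks"
  using block_label_in_labels[of a] labels unfolding arr_index_def by auto

lemma block_label_eq_iff:
  "\<lbrakk>a < n; a' < n\<rbrakk> \<Longrightarrow> block_label nu vs a = block_label nu vs a' \<longleftrightarrow> block_of nu a = block_of nu a'"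
  using block_of sum_nu len distinct by (simp add: block_label_def nth_eq_iff_index_eq)

lemma card_block_label_fibre:
  assumes v: "v \<in> arr_index ks"
  shows "card {a\<in>{..<n}. block_label nu vs a = v} = B v"
proof (cases "v \<in> set vs")
  case True
  then obtain b where b: "b < length nu" "vs ! b = v"
    using len by (metis in_set_conv_nth)
  then have "{a\<in>{..<n}. block_label nu vs a = v} = block nu b"
    using block_eq_fibre[of b nu] block_of sum_nu len distinct
    by (auto simp: block_label_def nth_eq_iff_index_eq)
  then show ?thesis
    using card_block[OF b(1)] sizes[OF b(1)] b v by simp
next
  case False
  then have "B v = 0" "{a\<in>{..<n}. block_label nu vs a = v} = {}"
    using covers v block_label_in_labels by auto
  then show ?thesis by simp
qed

definition base_tensor :: "nat multiset list" where
  "base_tensor = monomials_with_degrees n (length ks) (block_label nu vs)"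

lemma var_degrees_base_tensor: "a < n \<Longrightarrow> var_degrees base_tensor a = block_label nu vs a"
  using length_block_label by (simp add: base_tensor_def var_degrees_monomials_with_degrees)

lemma base_tensor_in_basis: "base_tensor \<in> sym_tensor_basis n ks"
  unfolding base_tensor_def
proof (rule monomials_with_degrees_in_basis)
  fix j assume j: "j < length ks"
  have "block_label nu vs a ! j = 0" if "a < n" "block_label nu vs a \<notin> arr_index ks" for a
    using block_label_in_labels[OF that(1)] labels that(2) j by auto
  then have "(\<Sum>a<n. block_label nu vs a ! j)
      = (\<Sum>v\<in>arr_index ks. v ! j * card {a\<in>{..<n}. block_label nu vs a = v})"
    by (intro sum_eq_sum_card_fibres) (simp_all add: finite_arr_index)
  also have "\<dots> = (\<Sum>v\<in>arr_index ks. v ! j * B v)"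
    by (intro sum.cong refl) (simp only: card_block_label_fibre)
  also have "\<dots> = ks ! j"
    using B j by (simp add: arrays_def)
  finally show "(\<Sum>a<n. block_label nu vs a ! j) = ks ! j" .
qed

lemma degree_array_base_tensor: "degree_array n ks base_tensor = B"
proof
  fix v
  have "{a\<in>{..<n}. var_degrees base_tensor a = v} = {a\<in>{..<n}. block_label nu vs a = v}"
    using var_degrees_base_tensor by auto
  then show "degree_array n ks base_tensor v = B v"
    using card_block_label_fibre B by (simp add: degree_array_def arrays_def)
qed

lemma stabilizer_base_tensor:
  "{g\<in>monomial_group n. perm_monomials n g base_tensor = base_tensor} = block_subgroup n nu"
  using perm_monomials_eq_self_iff[OF _ base_tensor_in_basis] var_degrees_base_tensor
    block_label_eq_iff mono_perm_lt block_subgroup_iff[OF sum_nu]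
  by auto

lemma block_char_base_tensor:
  assumes "h \<in> block_subgroup n nu"
  shows "block_char n nu (map (\<lambda>v. int (sum_list v)) vs) h = monomial_coef n h base_tensor"
proof -
  have h: "h \<in> monomial_group n"
    using assms by (simp add: block_subgroup_def)
  have "block_char n nu (map int (map sum_list vs)) h
      = (\<Prod>a<n. mono_entry n h a ^ (map sum_list vs ! block_of nu a))"
    using block_char_eq_prod[OF sum_nu h, of "map sum_list vs"] len by simp
  also have "\<dots> = (\<Prod>a<n. mono_entry n h a ^ sum_list (var_degrees base_tensor a))"
    using block_of[of _ nu] sum_nu len var_degrees_base_tensor
    by (intro prod.cong refl) (simp add: block_label_def)
  also have "\<dots> = monomial_coef n h base_tensor"
    using monomial_coef_eq_prod[OF base_tensor_in_basis h] by simp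
  finally show ?thesis by (simp add: comp_def)
qed

lemma transitive_monomial_action_base_tensor:
  "transitive_monomial_action (mono_grp n) {xs\<in>sym_tensor_basis n ks. degree_array n ks xs = B}
     (perm_monomials n) (monomial_coef n) base_tensor"
proof (intro transitive_monomial_action.intro transitive_monomial_action_axioms.intro)
  show "monomial_action (mono_grp n) {xs\<in>sym_tensor_basis n ks. degree_array n ks xs = B}
      (perm_monomials n) (monomial_coef n)"
    by (rule monomial_action.monomial_action_restrict[OF monomial_action_sym_tensor])
      (simp add: degree_array_perm_monomials)
  show "base_tensor \<in> {xs\<in>sym_tensor_basis n ks. degree_array n ks xs = B}"
    using base_tensor_in_basis degree_array_base_tensor by simp
  show "\<exists>g\<in>carrier (mono_grp n). perm_monomials n g base_tensor = x"
    if "x \<in> {xs\<in>sym_tensor_basis n ks. degree_array n ks xs = B}" for x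
    using that base_tensor_in_basis degree_array_base_tensor
      degree_array_eq_imp_orbit[of base_tensor n ks x] by auto
qed

end

lemma mset_eq_image_mset_imp_map:
  "mset ys = image_mset f M \<Longrightarrow> \<exists>zs. mset zs = M \<and> map f zs = ys"
proof (induction ys arbitrary: M)
  case (Cons y ys)
  then obtain z where z: "z \<in># M" "f z = y"
    by (metis image_iff list.set_intros(1) set_image_mset set_mset_mset)
  then have "image_mset f (M - {#z#}) = image_mset f M - {#y#}"
    by (simp add: image_mset_Diff)
  then have "mset ys = image_mset f (M - {#z#})"
    using Cons.prems by (metis add_mset_remove_trivial mset.simps(2))
  then obtain zs where "mset zs = M - {#z#}" "map f zs = ys"
    using Cons.IH by blast
  then show ?case
    using z by (intro exI[of _ "z # zs"]) simp
qed simp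

lemma lam_part_enumeration:
  "\<exists>L. distinct L \<and> set L = {v\<in>arr_index ks. sum_list v = l \<and> B v \<noteq> 0} \<and> map B L = lam_part ks B l"
proof -
  let ?S = "{v\<in>arr_index ks. sum_list v = l \<and> B v \<noteq> 0}"
  have "finite ?S" by (simp add: finite_arr_index)
  have "mset (lam_part ks B l) = image_mset B (mset_set ?S)"
    by (simp add: lam_part_def finite_arr_index filter_mset_mset_set)
  then obtain L where L: "mset L = mset_set ?S" "map B L = lam_part ks B l"
    using mset_eq_image_mset_imp_map by blast
  have "set L = ?S"
    using L(1) \<open>finite ?S\<close> by (metis finite_set_mset_mset_set set_mset_mset)
  moreover have "distinct L"
    using L(1) \<open>set L = ?S\<close> by (intro card_distinct) (metis size_mset size_mset_set)
  ultimately show ?thesis using L by blast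
qed

lemma sum_list_arr_index: "v \<in> arr_index ks \<Longrightarrow> 1 \<le> sum_list v \<and> sum_list v \<le> sum_list ks"
proof -
  assume v: "v \<in> arr_index ks"
  have "sum_list v \<noteq> 0"
  proof
    assume "sum_list v = 0"
    then have "replicate (length v) 0 = v"
      by (intro replicate_length_same) simp
    then show False
      using v by (simp add: arr_index_def)
  qed
  moreover have "sum_list v \<le> sum_list ks"
    using v unfolding arr_index_def by (auto intro!: sum_list_mono2 simp: list_all2_conv_all_nth)
  ultimately show ?thesis by linarith
qed

lemma sum_list_concat: "sum_list (concat xss) = sum_list (map sum_list xss)"
  by (induction xss) simp_all

lemma distinct_concat_graded:
  assumes "distinct ls" "\<And>l. distinct (L l)" "\<And>l v. v \<in> set (L l) \<Longrightarrow> f v = l"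
  shows "distinct (concat (map L ls))"
  using assms(1)
proof (induction ls)
  case (Cons l ls)
  have "set (L l) \<inter> set (concat (map L ls)) = {}"
  proof (rule ccontr)
    assume "set (L l) \<inter> set (concat (map L ls)) \<noteq> {}"
    then obtain v l' where "v \<in> set (L l)" "l' \<in> set ls" "v \<in> set (L l')" by auto
    then show False
      using Cons.prems assms(3) by (metis distinct.simps(2))
  qed
  then show ?case
    using Cons assms(2) by simp
qed simp

text \<open>The exponent vectors counted by \<open>B\<close>, listed in the order of the parts of
  \<open>\<lambda>\<^sub>1(B), \<lambda>\<^sub>2(B), \<dots>\<close>, together with the weight \<open>l\<close> that \<open>Mtilde\<close> attaches to a part of \<open>\<lambda>\<^sub>l(B)\<close>.\<close>

lemma enumerate_support_by_degree:
  obtains Vs where "distinct Vs" "set Vs = {v\<in>arr_index ks. B v \<noteq> 0}"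
    "map B Vs = concat (map (lam_part ks B) [1..<Suc (sum_list ks)])"
    "map (\<lambda>v. int (sum_list v)) Vs = concat (map (\<lambda>(i, lam). replicate (length lam) (int i))
       (zip [1..<Suc (sum_list ks)] (map (lam_part ks B) [1..<Suc (sum_list ks)])))"
proof -
  have "\<forall>l. \<exists>L. distinct L \<and> set L = {v\<in>arr_index ks. sum_list v = l \<and> B v \<noteq> 0} \<and> map B L = lam_part ks B l"
    using lam_part_enumeration by blast
  then have "\<exists>L. \<forall>l. distinct (L l) \<and> set (L l) = {v\<in>arr_index ks. sum_list v = l \<and> B v \<noteq> 0}
      \<and> map B (L l) = lam_part ks B l"
    by (rule choice)
  then obtain L where L: "\<And>l. distinct (L l)" "\<And>l. set (L l) = {v\<in>arr_index ks. sum_list v = l \<and> B v \<noteq> 0}"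
    "\<And>l. map B (L l) = lam_part ks B l"
    by blast
  define Vs where "Vs = concat (map L [1..<Suc (sum_list ks)])"
  have weight: "map (\<lambda>v. int (sum_list v)) (L i) = replicate (length (lam_part ks B i)) (int i)" for i
  proof -
    have "map (\<lambda>v. int (sum_list v)) (L i) = map (\<lambda>_. int i) (L i)"
      using L(2)[of i] by (intro map_cong) auto
    then show ?thesis
      by (simp add: map_replicate_const flip: L(3)[of i])
  qed
  show thesis
  proof
    show "distinct Vs"
      unfolding Vs_def using L(1,2) by (intro distinct_concat_graded[where f = sum_list]) auto
    show "set Vs = {v\<in>arr_index ks. B v \<noteq> 0}"
      using sum_list_arr_index by (fastforce simp: Vs_def L(2) simp del: upt_Suc)
    show "map B Vs = concat (map (lam_part ks B) [1..<Suc (sum_list ks)])"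
      by (simp add: Vs_def map_concat comp_def L(3) del: upt_Suc)
    show "map (\<lambda>v. int (sum_list v)) Vs = concat (map (\<lambda>(i, lam). replicate (length lam) (int i))
       (zip [1..<Suc (sum_list ks)] (map (lam_part ks B) [1..<Suc (sum_list ks)])))"
      by (simp add: Vs_def weight zip_map2 zip_same_conv_map map_concat comp_def del: upt_Suc)
  qed
qed

text \<open>The part \<open>n - m\<close> of the composition is labelled by the zero exponent vector.\<close>

lemma Mtilde_eq_Mrep:
  assumes B: "B \<in> arrays n ks"
  obtains nu vs where
    "Mtilde n (map (lam_part ks B) [1..<Suc (sum_list ks)]) = Mrep n nu (map (\<lambda>v. int (sum_list v)) vs)"
    "sum_list nu = n" "length vs = length nu" "distinct vs"
    "set vs \<subseteq> insert (replicate (length ks) 0) (arr_index ks)"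
    "{v\<in>arr_index ks. B v \<noteq> 0} \<subseteq> set vs"
    "\<And>b. \<lbrakk>b < length nu; vs ! b \<in> arr_index ks\<rbrakk> \<Longrightarrow> nu ! b = B (vs ! b)"
proof -
  define lams where "lams = map (lam_part ks B) [1..<Suc (sum_list ks)]"
  obtain Vs where Vs: "distinct Vs" "set Vs = {v\<in>arr_index ks. B v \<noteq> 0}" "map B Vs = concat lams"
    and weights: "map (\<lambda>v. int (sum_list v)) Vs
      = concat (map (\<lambda>(i, lam). replicate (length lam) (int i)) (zip [1..<Suc (length lams)] lams))"
    unfolding lams_def length_map length_upt diff_Suc_1 by (rule enumerate_support_by_degree)
  define m where "m = sum_list (map sum_list lams)"
  have "m = (\<Sum>v\<in>arr_index ks. B v)"
  proof -
    have "m = sum_list (map B Vs)"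
      by (simp add: m_def sum_list_concat Vs(3))
    also have "\<dots> = (\<Sum>v\<in>set Vs. B v)"
      using Vs(1) by (simp add: sum_list_distinct_conv_sum_set)
    also have "\<dots> = (\<Sum>v\<in>arr_index ks. B v)"
      unfolding Vs(2) by (rule sum.mono_neutral_left) (auto simp: finite_arr_index)
    finally show ?thesis .
  qed
  then have "m \<le> n"
    using B by (simp add: arrays_def)
  define nu where "nu = (if n - m = 0 then [] else [n - m]) @ concat lams"
  define vs where "vs = (if n - m = 0 then [] else [replicate (length ks) 0]) @ Vs"
  have nu_eq: "nu = map (\<lambda>v. if v \<in> arr_index ks then B v else n - m) vs"
    using Vs(2) by (simp add: nu_def vs_def flip: Vs(3)) (simp add: arr_index_def)
  show thesis
  proof
    show "Mtilde n (map (lam_part ks B) [1..<Suc (sum_list ks)]) = Mrep n nu (map (\<lambda>v. int (sum_list v)) vs)"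
      unfolding Mtilde_def Let_def lams_def[symmetric] m_def[symmetric] weights[symmetric]
      by (simp add: nu_def vs_def sum_list_replicate)
    show "sum_list nu = n"
      using \<open>m \<le> n\<close> by (simp add: nu_def m_def sum_list_concat)
    show "length vs = length nu" "distinct vs" "set vs \<subseteq> insert (replicate (length ks) 0) (arr_index ks)"
      "{v\<in>arr_index ks. B v \<noteq> 0} \<subseteq> set vs"
      using Vs(1,2) by (auto simp: nu_eq vs_def arr_index_def)
    show "\<And>b. \<lbrakk>b < length nu; vs ! b \<in> arr_index ks\<rbrakk> \<Longrightarrow> nu ! b = B (vs ! b)"
      by (simp add: nu_eq)
  qed
qed

lemma orbit_monomial_iso_Mtilde:
  assumes B: "B \<in> arrays n ks"
  shows "monomial_iso (monomial_group n)
     ({xs\<in>sym_tensor_basis n ks. degree_array n ks xs = B}, snd (tensor_list (map (\<lambda>k. symrep k (defrep n)) ks)))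
     (Mtilde n (map (lam_part ks B) [1..<Suc (sum_list ks)]))"
proof -
  obtain nu vs where Mtilde: "Mtilde n (map (lam_part ks B) [1..<Suc (sum_list ks)])
      = Mrep n nu (map (\<lambda>v. int (sum_list v)) vs)" and labelling: "sum_list nu = n" "length vs = length nu"
    "distinct vs" "set vs \<subseteq> insert (replicate (length ks) 0) (arr_index ks)"
    "{v\<in>arr_index ks. B v \<noteq> 0} \<subseteq> set vs" "\<And>b. \<lbrakk>b < length nu; vs ! b \<in> arr_index ks\<rbrakk> \<Longrightarrow> nu ! b = B (vs ! b)"
    using Mtilde_eq_Mrep[OF B] by blast
  define X where "X = {xs\<in>sym_tensor_basis n ks. degree_array n ks xs = B}"
  define x0 where "x0 = base_tensor n ks nu vs"
  interpret orbit: transitive_monomial_action "mono_grp n" X "perm_monomials n" "monomial_coef n" x0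
    unfolding X_def x0_def by (rule transitive_monomial_action_base_tensor[OF B labelling])
  have stabilizer: "orbit.orbit_coset x0 = block_subgroup n nu"
    unfolding orbit.orbit_coset_def using stabilizer_base_tensor[OF B labelling] by (simp add: x0_def)
  have "monomial_iso (carrier (mono_grp n)) (X, snd (tensor_list (map (\<lambda>k. symrep k (defrep n)) ks)))
      (ind_char (\<otimes>\<^bsub>mono_grp n\<^esub>) (carrier (mono_grp n)) (orbit.orbit_coset x0)
        (block_char n nu (map (\<lambda>v. int (sum_list v)) vs)))"
  proof (rule orbit.monomial_iso_ind_char)
    show "finite X"
      unfolding X_def using finite_sym_tensor_basis by simp
    show "block_char n nu (map (\<lambda>v. int (sum_list v)) vs) h = monomial_coef n h x0"
      if "h \<in> orbit.orbit_coset x0" for h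
      using block_char_base_tensor[OF B labelling that[unfolded stabilizer]] by (simp add: x0_def)
    show "snd (tensor_list (map (\<lambda>k. symrep k (defrep n)) ks)) g x' x
        = (if x' = perm_monomials n g x then monomial_coef n g x else 0)"
      if "g \<in> carrier (mono_grp n)" "x \<in> X" "x' \<in> X" for g x x'
      using that snd_tensor_sym_powers unfolding X_def by simp
  qed
  then show ?thesis
    unfolding Mtilde Mrep_def X_def stabilizer by simp
qed

theorem proposition3p8:
  fixes n :: nat and ks :: "nat list"
  shows "rep_iso (monomial_group n)
           (tensor_list (map (\<lambda>k. symrep k (defrep n)) ks))
           (dsum (arrays n ks) (\<lambda>B. Mtilde n (map (lam_part ks B) [1..<Suc (sum_list ks)])))"
proof -
  let ?K = "snd (tensor_list (map (\<lambda>k. symrep k (defrep n)) ks))"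
  have "monomial_iso (monomial_group n) (sym_tensor_basis n ks, ?K)
      (dsum (arrays n ks) (\<lambda>B. Mtilde n (map (lam_part ks B) [1..<Suc (sum_list ks)])))"
  proof (rule monomial_iso_dsum[where \<beta> = "degree_array n ks"])
    show "monomial_iso (monomial_group n) ({x\<in>sym_tensor_basis n ks. degree_array n ks x = B}, ?K)
        (Mtilde n (map (lam_part ks B) [1..<Suc (sum_list ks)]))" if "B \<in> arrays n ks" for B
      using that by (rule orbit_monomial_iso_Mtilde)
    show "?K g x' x = 0" if "g \<in> monomial_group n" "x \<in> sym_tensor_basis n ks"
      "x' \<in> sym_tensor_basis n ks" "degree_array n ks x' \<noteq> degree_array n ks x" for g x x'
      using that snd_tensor_sym_powers degree_array_perm_monomials by metis
  qed (simp_all add: finite_arrays finite_sym_tensor_basis degree_array_in_arrays)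
  then show ?thesis
    using monomial_iso_imp_rep_iso fst_tensor_sym_powers by (metis prod.collapse)
qed

end
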